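(* For any integer $N>10$ and any integer $m\ge1$, there exists a collection $\mathcal{I}$ of $N$ pairwise disjoint subintervals of $[-\tfrac12,\tfrac12]$, each of length $\frac{N^{-(2m-1)}}{3m}$, such that the Minkowski sums $I_1+\cdots+I_m$ ($I_1,\dots,I_m\in\mathcal{I}$) form a pairwise disjoint collection, i.e. whenever $(I_1,\dots,I_m)$ and $(J_1,\dots,J_m)$ are elements of $\mathcal{I}^m$ that differ as multisets, $(I_1+\cdots+I_m)\cap(J_1+\cdots+J_m)=\emptyset$. *)

theory Defs
  imports "HOL-Analysis.Analysis" "HOL-Library.Multiset"
begin

definition minkowski_sum :: "nat \<Rightarrow> (nat \<Rightarrow> real set) \<Rightarrow> real set" where
  "minkowski_sum m S = {(\<Sum>k<m. x k) | x. \<forall>k<m. x k \<in> S k}"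

end

theory Submission
  imports Defs
begin

text \<open>
  Choose integers \<open>x 0, \<dots>, x (N - 1)\<close> in \<open>[0, 2P]\<close>, \<open>P = N ^ (2m - 1)\<close>, greedily so that
  equal-size multisets of at most \<open>m\<close> of them have distinct sums. A new value \<open>v\<close> creates a
  collision only if \<open>v\<close> equals the exact quotient \<open>(\<Sum>x\<^sub>u - \<Sum>x\<^sub>w) / (|u| - |w|)\<close> for
  some lists \<open>u\<close>, \<open>w\<close> of old indices with \<open>|w| < |u| \<le> m\<close>; there are at most
  \<open>2 (N - 1) ^ (2m - 1) \<le> 2P\<close> such pairs, so a free value always remains. Mapping
  \<open>x i\<close> to \<open>x i / (2P + 1) - 1/2\<close> puts the intervals in \<open>[-1/2, 1/2]\<close> and separates distinct
  sums of \<open>m\<close> left endpoints by \<open>1 / (2P + 1)\<close>, more than the length \<open>m L = 1 / (3P)\<close>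
  of a Minkowski sum of \<open>m\<close> intervals.
\<close>

definition msum_injective :: "nat \<Rightarrow> nat \<Rightarrow> (nat \<Rightarrow> int) \<Rightarrow> bool" where
  "msum_injective m n x \<longleftrightarrow>
     (\<forall>F G. set_mset F \<subseteq> {..<n} \<longrightarrow> set_mset G \<subseteq> {..<n} \<longrightarrow>
        size F = size G \<longrightarrow> size F \<le> m \<longrightarrow> F \<noteq> G \<longrightarrow>
        sum_mset (image_mset x F) \<noteq> sum_mset (image_mset x G))"

definition short_list_pairs :: "nat \<Rightarrow> nat \<Rightarrow> (nat list \<times> nat list) set" where
  "short_list_pairs q m =
     {(u, w). set u \<subseteq> {..<q} \<and> set w \<subseteq> {..<q} \<and> length w < length u \<and> length u \<le> m}"

definition forbidden_values :: "(nat \<Rightarrow> int) \<Rightarrow> nat \<Rightarrow> nat \<Rightarrow> int set" where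
  "forbidden_values x q m =
     (\<lambda>(u, w). (sum_list (map x u) - sum_list (map x w)) div int (length u - length w))
       ` short_list_pairs q m"

lemma geometric_sum_le:
  fixes q k :: nat
  assumes "q \<ge> 1"
  shows "(q - 1) * (\<Sum>t<k. q ^ t) \<le> q ^ k"
proof (induction k)
  case (Suc k)
  have "(q - 1) * (\<Sum>t<Suc k. q ^ t) = (q - 1) * (\<Sum>t<k. q ^ t) + (q - 1) * q ^ k"
    by (simp add: algebra_simps)
  also have "\<dots> \<le> q ^ k + (q - 1) * q ^ k"
    using Suc by simp
  also have "\<dots> = q ^ Suc k"
    using assms by (cases q) auto
  finally show ?case .
qed simp

lemma double_geometric_sum_le:
  fixes q m :: nat
  assumes q: "q \<ge> 3" and m: "m \<ge> 1"
  shows "(\<Sum>s\<in>{1..m}. \<Sum>t<s. q ^ s * q ^ t) \<le> 2 * q ^ (2 * m - 1)"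
  using m
proof (induction m rule: dec_induct)
  case (step m)
  define r where "r = q ^ (2 * m - 1)"
  have exp_Suc: "2 * Suc m - 1 = Suc (Suc (2 * m - 1))"
    and exp_square: "Suc m + Suc m = Suc (Suc (Suc (2 * m - 1)))"
    using step.hyps by simp_all
  have r_Suc: "q ^ (2 * Suc m - 1) = q * q * r"
    unfolding exp_Suc r_def by simp
  have r_square: "q ^ Suc m * q ^ Suc m = q * q * q * r"
    unfolding r_def power_add[symmetric] exp_square by simp
  have new_terms: "(q - 1) * (q ^ Suc m * (\<Sum>t<Suc m. q ^ t)) \<le> q * q * q * r"
    using mult_le_mono2[OF geometric_sum_le[of q "Suc m"], of "q ^ Suc m"] q r_square
    by (simp add: algebra_simps)
  have "(\<Sum>s\<in>{1..Suc m}. \<Sum>t<s. q ^ s * q ^ t)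
        = (\<Sum>s\<in>{1..m}. \<Sum>t<s. q ^ s * q ^ t) + q ^ Suc m * (\<Sum>t<Suc m. q ^ t)"
    by (simp add: sum_distrib_left algebra_simps)
  then have "(q - 1) * (\<Sum>s\<in>{1..Suc m}. \<Sum>t<s. q ^ s * q ^ t)
        = (q - 1) * (\<Sum>s\<in>{1..m}. \<Sum>t<s. q ^ s * q ^ t) + (q - 1) * (q ^ Suc m * (\<Sum>t<Suc m. q ^ t))"
    by (simp only: add_mult_distrib2)
  also have "\<dots> \<le> (q - 1) * (2 * r) + q * q * q * r"
    using step.IH new_terms unfolding r_def by (intro add_mono) auto
  also have "\<dots> \<le> (q - 1) * (2 * (q * q * r))"
  proof -
    obtain p where "q = p + 3"
      using q by (metis add.commute le_iff_add)
    then have "2 * (q - 1) + q * q * q \<le> (q - 1) * (2 * (q * q))"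
      by (simp add: algebra_simps)
    from mult_le_mono1[OF this, of r] show ?thesis
      by (simp add: algebra_simps)
  qed
  finally show ?case
    unfolding r_Suc using q by (simp add: mult_le_cancel1)
qed simp

lemma card_short_list_pairs_le:
  assumes "q \<ge> 3" and "m \<ge> 1"
  shows "card (short_list_pairs q m) \<le> 2 * q ^ (2 * m - 1)"
proof -
  let ?lists = "\<lambda>s. {xs. set xs \<subseteq> {..<q} \<and> length xs = s}"
  have cover: "short_list_pairs q m \<subseteq> (\<Union>s\<in>{1..m}. \<Union>t<s. ?lists s \<times> ?lists t)"
    unfolding short_list_pairs_def by force
  have "card (short_list_pairs q m) \<le> card (\<Union>s\<in>{1..m}. \<Union>t<s. ?lists s \<times> ?lists t)"
    by (intro card_mono[OF _ cover] finite_UN_I finite_cartesian_product finite_lists_length_eq) auto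
  also have "\<dots> \<le> (\<Sum>s\<in>{1..m}. card (\<Union>t<s. ?lists s \<times> ?lists t))"
    by (rule card_UN_le) simp
  also have "\<dots> \<le> (\<Sum>s\<in>{1..m}. \<Sum>t<s. card (?lists s \<times> ?lists t))"
    by (intro sum_mono card_UN_le) simp
  also have "\<dots> = (\<Sum>s\<in>{1..m}. \<Sum>t<s. q ^ s * q ^ t)"
    by (simp add: card_cartesian_product card_lists_length_eq)
  also have "\<dots> \<le> 2 * q ^ (2 * m - 1)"
    using assms by (rule double_geometric_sum_le)
  finally show ?thesis .
qed

lemma finite_short_list_pairs: "finite (short_list_pairs q m)"
proof (rule finite_subset)
  show "short_list_pairs q m \<subseteq> {u. set u \<subseteq> {..<q} \<and> length u \<le> m} \<times> {w. set w \<subseteq> {..<q} \<and> length w \<le> m}"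
    unfolding short_list_pairs_def by auto
qed (intro finite_cartesian_product finite_lists_length_le; simp)+

lemma card_forbidden_values_le: "card (forbidden_values x q m) \<le> card (short_list_pairs q m)"
  unfolding forbidden_values_def by (rule card_image_le[OF finite_short_list_pairs])

lemma finite_forbidden_values: "finite (forbidden_values x q m)"
  unfolding forbidden_values_def by (rule finite_imageI[OF finite_short_list_pairs])

lemma forbidden_valuesI:
  assumes "set_mset F \<subseteq> {..<q}" and "set_mset G \<subseteq> {..<q}"
    and "size F < size G" and "size G \<le> m"
    and "sum_mset (image_mset x G) - sum_mset (image_mset x F) = int (size G - size F) * v"
  shows "v \<in> forbidden_values x q m"
proof -
  obtain u w where u: "mset u = G" and w: "mset w = F"
    using ex_mset by metis
  have "(u, w) \<in> short_list_pairs q m"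
    using assms(1-4) unfolding short_list_pairs_def u[symmetric] w[symmetric] by auto
  moreover have "v = (sum_list (map x u) - sum_list (map x w)) div int (length u - length w)"
    using assms(3,5) unfolding u[symmetric] w[symmetric]
    by (simp add: sum_mset_sum_list[symmetric])
  ultimately show ?thesis
    unfolding forbidden_values_def by force
qed

lemma filter_mset_neq_plus_replicate: "F = {#i \<in># F. i \<noteq> n#} + replicate_mset (count F n) n"
  by (rule multiset_eqI) auto

lemma size_filter_mset_neq: "size F = size {#i \<in># F. i \<noteq> n#} + count F n"
  by (subst filter_mset_neq_plus_replicate[of F n]) simp

lemma sum_mset_image_fun_upd:
  "sum_mset (image_mset (x(n := v)) F) = sum_mset (image_mset x {#i \<in># F. i \<noteq> n#}) + int (count F n) * v"
proof -
  have "image_mset (x(n := v)) {#i \<in># F. i \<noteq> n#} = image_mset x {#i \<in># F. i \<noteq> n#}"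
    by (intro image_mset_cong) auto
  then show ?thesis
    by (subst filter_mset_neq_plus_replicate[of F n]) (simp add: sum_mset_replicate_mset)
qed

lemma fun_upd_collision_forbidden:
  assumes F: "set_mset F \<subseteq> {..<Suc n}" and G: "set_mset G \<subseteq> {..<Suc n}"
    and size_eq: "size F = size G" and size_le: "size F \<le> m" and "n \<le> q"
    and count_less: "count G n < count F n"
    and sum_eq: "sum_mset (image_mset (x(n := v)) F) = sum_mset (image_mset (x(n := v)) G)"
  shows "v \<in> forbidden_values x q m"
proof (rule forbidden_valuesI)
  define F' where "F' = {#i \<in># F. i \<noteq> n#}"
  define G' where "G' = {#i \<in># G. i \<noteq> n#}"
  have sizes: "size F = size F' + count F n" "size G = size G' + count G n"
    unfolding F'_def G'_def by (rule size_filter_mset_neq)+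
  show "set_mset F' \<subseteq> {..<q}" "set_mset G' \<subseteq> {..<q}"
    using F G \<open>n \<le> q\<close> unfolding F'_def G'_def by fastforce+
  show "size F' < size G'" "size G' \<le> m"
    using sizes size_eq size_le count_less by linarith+
  have "sum_mset (image_mset x G') - sum_mset (image_mset x F') = (int (count F n) - int (count G n)) * v"
    using sum_eq unfolding sum_mset_image_fun_upd F'_def G'_def by (simp add: algebra_simps)
  moreover have "int (size G' - size F') = int (count F n) - int (count G n)"
    using sizes size_eq count_less by linarith
  ultimately show "sum_mset (image_mset x G') - sum_mset (image_mset x F') = int (size G' - size F') * v"
    by simp
qed

lemma msum_injective_fun_upd:
  assumes inj: "msum_injective m n x" and "n \<le> q" and v: "v \<notin> forbidden_values x q m"
  shows "msum_injective m (Suc n) (x(n := v))"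
  unfolding msum_injective_def
proof (intro allI impI notI)
  fix F G :: "nat multiset"
  assume F: "set_mset F \<subseteq> {..<Suc n}" and G: "set_mset G \<subseteq> {..<Suc n}"
    and size_eq: "size F = size G" and size_le: "size F \<le> m" and "F \<noteq> G"
    and sum_eq: "sum_mset (image_mset (x(n := v)) F) = sum_mset (image_mset (x(n := v)) G)"
  consider "count G n < count F n" | "count F n < count G n" | "count F n = count G n"
    by linarith
  then show False
  proof cases
    case 1
    then show False
      using fun_upd_collision_forbidden[OF F G size_eq size_le \<open>n \<le> q\<close> _ sum_eq] v by blast
  next
    case 2
    then show False
      using fun_upd_collision_forbidden[OF G F size_eq[symmetric] _ \<open>n \<le> q\<close> _ sum_eq[symmetric]]
        v size_eq size_le by auto
  next
    case 3
    define F' where "F' = {#i \<in># F. i \<noteq> n#}"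
    define G' where "G' = {#i \<in># G. i \<noteq> n#}"
    have "F' \<noteq> G'"
      using \<open>F \<noteq> G\<close> 3 filter_mset_neq_plus_replicate[of F n] filter_mset_neq_plus_replicate[of G n]
      unfolding F'_def G'_def by metis
    moreover have "set_mset F' \<subseteq> {..<n}" "set_mset G' \<subseteq> {..<n}"
      using F G unfolding F'_def G'_def by auto
    moreover have "size F' = size G'" "size F' \<le> m"
      using size_filter_mset_neq[of F n] size_filter_mset_neq[of G n] size_eq size_le 3
      unfolding F'_def G'_def by linarith+
    moreover have "sum_mset (image_mset x F') = sum_mset (image_mset x G')"
      using sum_eq 3 unfolding sum_mset_image_fun_upd F'_def G'_def by simp
    ultimately show False
      using inj unfolding msum_injective_def by blast
  qed
qed

lemma msum_injective_exists_if_card_le: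
  assumes "card (short_list_pairs q m) \<le> X" and "n \<le> Suc q"
  shows "\<exists>x. msum_injective m n x \<and> (\<forall>i<n. x i \<in> {0..int X})"
  using assms(2)
proof (induction n)
  case 0
  then show ?case
    unfolding msum_injective_def by auto
next
  case (Suc n)
  then obtain x where inj: "msum_injective m n x" and range: "\<forall>i<n. x i \<in> {0..int X}"
    by auto
  have "card (forbidden_values x q m) < card {0..int X}"
    using card_forbidden_values_le[of x q m] assms(1) by simp
  then obtain v where "v \<in> {0..int X}" "v \<notin> forbidden_values x q m"
    using card_mono[OF finite_forbidden_values, of "{0..int X}"] by force
  then have "msum_injective m (Suc n) (x(n := v)) \<and> (\<forall>i<Suc n. (x(n := v)) i \<in> {0..int X})"
    using msum_injective_fun_upd[OF inj _] Suc.prems range by (auto simp: less_Suc_eq)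
  then show ?case
    by blast
qed

lemma msum_injective_exists:
  assumes "N \<ge> 4" and "m \<ge> 1"
  shows "\<exists>x. msum_injective m N x \<and> (\<forall>i<N. x i \<in> {0..int (2 * N ^ (2 * m - 1))})"
proof -
  have "(N - 1) ^ (2 * m - 1) \<le> N ^ (2 * m - 1)"
    by (simp add: power_mono)
  then have "card (short_list_pairs (N - 1) m) \<le> 2 * N ^ (2 * m - 1)"
    using card_short_list_pairs_le[of "N - 1" m] assms by linarith
  then show ?thesis
    using msum_injective_exists_if_card_le[of "N - 1" m "2 * N ^ (2 * m - 1)" N] assms(1) by simp
qed

lemma minkowski_sum_intervals_bounds:
  assumes "z \<in> minkowski_sum m (\<lambda>k. {b k .. b k + L})"
  shows "(\<Sum>k<m. b k) \<le> z" and "z \<le> (\<Sum>k<m. b k) + real m * L"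
proof -
  obtain y where z: "z = (\<Sum>k<m. y k)" and y: "\<forall>k<m. y k \<in> {b k .. b k + L}"
    using assms unfolding minkowski_sum_def by blast
  show "(\<Sum>k<m. b k) \<le> z"
    unfolding z using y by (intro sum_mono) auto
  have "z \<le> (\<Sum>k<m. b k + L)"
    unfolding z using y by (intro sum_mono) auto
  then show "z \<le> (\<Sum>k<m. b k) + real m * L"
    by (simp add: sum.distrib)
qed

lemma minkowski_sums_intervals_disjoint:
  assumes "real m * L < \<bar>(\<Sum>k<m. b k) - (\<Sum>k<m. c k)\<bar>"
  shows "minkowski_sum m (\<lambda>k. {b k .. b k + L}) \<inter> minkowski_sum m (\<lambda>k. {c k .. c k + L}) = {}"
  using minkowski_sum_intervals_bounds[of _ m b L] minkowski_sum_intervals_bounds[of _ m c L] assms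
  by fastforce

lemma sum_mset_image_mset_upt:
  "sum_mset (image_mset x (image_mset f (mset [0..<m]))) = (\<Sum>k<m. x (f k))"
  by (simp add: image_mset.compositionality atLeast0LessThan sum_unfold_sum_mset comp_def)

lemma msum_injective_scaled_intervals:
  fixes x :: "nat \<Rightarrow> int" and \<delta> L :: real
  assumes inj: "msum_injective m N x" and range: "\<forall>i<N. x i \<in> {0..int X}" and "m \<ge> 1"
    and "0 \<le> L" and sep: "real m * L < \<delta>" and fits: "\<delta> * (real X + 1) \<le> 1"
  shows "\<exists>a :: nat \<Rightarrow> real. (\<forall>i<N. {a i .. a i + L} \<subseteq> {-1/2 .. 1/2}) \<and>
         (\<forall>i<N. \<forall>j<N. i \<noteq> j \<longrightarrow> {a i .. a i + L} \<inter> {a j .. a j + L} = {}) \<and>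
         (\<forall>f g :: nat \<Rightarrow> nat.
            (\<forall>k<m. f k < N) \<longrightarrow> (\<forall>k<m. g k < N) \<longrightarrow>
            image_mset f (mset [0..<m]) \<noteq> image_mset g (mset [0..<m]) \<longrightarrow>
            minkowski_sum m (\<lambda>k. {a (f k) .. a (f k) + L})
              \<inter> minkowski_sum m (\<lambda>k. {a (g k) .. a (g k) + L}) = {})"
proof (intro exI conjI allI impI)
  define a where "a i = \<delta> * real_of_int (x i) - 1/2" for i
  have "0 \<le> real m * L"
    using \<open>0 \<le> L\<close> by simp
  then have "\<delta> > 0"
    using sep by linarith
  have "L \<le> real m * L"
    using \<open>m \<ge> 1\<close> \<open>0 \<le> L\<close> by (simp add: mult_le_cancel_right1)
  then have "\<delta> * real X + L \<le> 1"
    using sep fits by (simp add: algebra_simps)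
  have separated: "real m * L < \<bar>\<delta> * real_of_int s - \<delta> * real_of_int t\<bar>" if "s \<noteq> t" for s t :: int
  proof -
    from that have "1 \<le> \<bar>real_of_int s - real_of_int t\<bar>"
      by linarith
    then have "\<delta> \<le> \<bar>\<delta> * real_of_int s - \<delta> * real_of_int t\<bar>"
      using \<open>\<delta> > 0\<close> by (simp add: abs_mult right_diff_distrib[symmetric])
    then show ?thesis
      using sep by linarith
  qed
  show "{a i .. a i + L} \<subseteq> {-1/2 .. 1/2}" if "i < N" for i
  proof -
    have "0 \<le> \<delta> * real_of_int (x i)" "\<delta> * real_of_int (x i) \<le> \<delta> * real X"
      using range that \<open>\<delta> > 0\<close> by auto
    then show ?thesis
      unfolding a_def using \<open>\<delta> * real X + L \<le> 1\<close> by auto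
  qed
  show "{a i .. a i + L} \<inter> {a j .. a j + L} = {}" if "i < N" "j < N" "i \<noteq> j" for i j
  proof -
    have "x i \<noteq> x j"
      using inj[unfolded msum_injective_def, rule_format, of "{#i#}" "{#j#}"] that \<open>m \<ge> 1\<close>
      by simp
    then have "L < \<bar>a i - a j\<bar>"
      using separated[of "x i" "x j"] \<open>L \<le> real m * L\<close> unfolding a_def by simp
    then show ?thesis
      by auto
  qed
  fix f g :: "nat \<Rightarrow> nat"
  assume "\<forall>k<m. f k < N" "\<forall>k<m. g k < N"
    and "image_mset f (mset [0..<m]) \<noteq> image_mset g (mset [0..<m])"
  then have sums_differ: "(\<Sum>k<m. x (f k)) \<noteq> (\<Sum>k<m. x (g k))"
    using inj[unfolded msum_injective_def, rule_format,
        of "image_mset f (mset [0..<m])" "image_mset g (mset [0..<m])"]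
    unfolding sum_mset_image_mset_upt by (auto simp: image_subset_iff)
  have "(\<Sum>k<m. a (h k)) = \<delta> * real_of_int (\<Sum>k<m. x (h k)) - real m / 2" for h
    unfolding a_def by (simp add: sum_subtractf sum_distrib_left)
  then have "real m * L < \<bar>(\<Sum>k<m. a (f k)) - (\<Sum>k<m. a (g k))\<bar>"
    using separated[OF sums_differ] by simp
  then show "minkowski_sum m (\<lambda>k. {a (f k) .. a (f k) + L})
                   \<inter> minkowski_sum m (\<lambda>k. {a (g k) .. a (g k) + L}) = {}"
    by (rule minkowski_sums_intervals_disjoint)
qed

theorem lemma3p1:
  fixes N m :: nat
  assumes "N > 10" and "m \<ge> 1"
  shows "\<exists>a :: nat \<Rightarrow> real.
     (let L = (real N) powi (- (2 * int m - 1)) / (3 * real m) in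
       (\<forall>i<N. {a i .. a i + L} \<subseteq> {-1/2 .. 1/2}) \<and>
       (\<forall>i<N. \<forall>j<N. i \<noteq> j \<longrightarrow> {a i .. a i + L} \<inter> {a j .. a j + L} = {}) \<and>
       (\<forall>f g :: nat \<Rightarrow> nat.
          (\<forall>k<m. f k < N) \<longrightarrow> (\<forall>k<m. g k < N) \<longrightarrow>
          image_mset f (mset [0..<m]) \<noteq> image_mset g (mset [0..<m]) \<longrightarrow>
          minkowski_sum m (\<lambda>k. {a (f k) .. a (f k) + L})
            \<inter> minkowski_sum m (\<lambda>k. {a (g k) .. a (g k) + L}) = {}))"
proof -
  define P where "P = N ^ (2 * m - 1)"
  define L where "L = (real N) powi (- (2 * int m - 1)) / (3 * real m)"
  obtain x where inj: "msum_injective m N x" and range: "\<forall>i<N. x i \<in> {0..int (2 * P)}"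
    using msum_injective_exists[of N m] assms unfolding P_def by auto
  have "P \<ge> N"
    unfolding P_def using assms by (simp add: self_le_power)
  then have P_gap: "2 * real P + 1 < 3 * real P"
    using assms(1) by linarith
  have exponent: "2 * int m - 1 = int (2 * m - 1)"
    using assms(2) by simp
  have "real N powi (- (2 * int m - 1)) = 1 / real P"
    unfolding P_def exponent by (simp add: power_int_minus_divide power_int_of_nat)
  then have "real m * L = 1 / (3 * real P)"
    unfolding L_def using assms(2) by simp
  with P_gap have sep: "real m * L < 1 / (2 * P + 1)"
    by (simp add: frac_less2)
  have "1 / (2 * P + 1) * (real (2 * P) + 1) \<le> 1"
    by simp
  from msum_injective_scaled_intervals[OF inj range assms(2) _ sep this]
  show ?thesis
    unfolding Let_def L_def[symmetric] by (simp add: L_def)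
qed

end
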